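(* Let $M$ be the bounded distributive lattice of subsets of $\mathbb{N}$ that are either finite or equal to $\mathbb{N}$ (ordered by inclusion; this is a $\kappa$-frame for $\kappa=\aleph_0$). Then $M$ is d-reduced. Let $I=\{S\in M\mid 2\notin S\}$; then $I$ is an ideal of $M$, equal to the pseudocomplement $(\downarrow\{2\})^*$ in the lattice of ideals of $M$, and the quotient $M/\nabla_I$ has exactly three elements $[\emptyset]<[\{2\}]<[\mathbb{N}]$, so it is isomorphic to the three-element chain and is not d-reduced. Hence quotients of d-reduced $\kappa$-frames need not be d-reduced.
   Context: For $\kappa=\aleph_0$, $\kappa$-frames are bounded distributive lattices and $\kappa$-ideals are (nonempty) lattice ideals. A congruence is an equivalence relation that is a sublattice (preserving bounds) of $M\times M$. For an ideal $I$, $\nabla_I=\{(x,y)\mid x\vee i=y\vee i\text{ for some }i\in I\}$, the congruence generated by $\{(0,i)\mid i\in I\}$. A $\kappa$-frame $L$ is d-reduced if $\mathfrak{D}_L=\{(a,b)\mid\forall x\in L:\ a\wedge x=0\iff b\wedge x=0\}$ is the diagonal. The pseudocomplement $J^*$ of an ideal $J$ is the largest ideal $K$ with $K\cap J=\{0\}$. *)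

theory Defs
  imports Main
begin

text \<open>The lattice M of subsets of nat that are finite or all of nat, ordered by inclusion
  (meet = intersection, join = union, bottom = empty set, top = UNIV).\<close>
definition finCof :: "nat set set" where
  "finCof = {S. finite S \<or> S = UNIV}"

definition d_rel :: "'a set \<Rightarrow> ('a \<Rightarrow> 'a \<Rightarrow> 'a) \<Rightarrow> 'a \<Rightarrow> ('a \<times> 'a) set" where
  "d_rel L meet z = {(a,b). a \<in> L \<and> b \<in> L \<and> (\<forall>x\<in>L. meet a x = z \<longleftrightarrow> meet b x = z)}"

definition d_reduced :: "'a set \<Rightarrow> ('a \<Rightarrow> 'a \<Rightarrow> 'a) \<Rightarrow> 'a \<Rightarrow> bool" where
  "d_reduced L meet z \<longleftrightarrow> d_rel L meet z = Id_on L"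

definition lattice_ideal :: "'a set set \<Rightarrow> 'a set set \<Rightarrow> bool" where
  "lattice_ideal L I \<longleftrightarrow> I \<subseteq> L \<and> I \<noteq> {} \<and>
     (\<forall>a\<in>I. \<forall>b\<in>L. b \<subseteq> a \<longrightarrow> b \<in> I) \<and> (\<forall>a\<in>I. \<forall>b\<in>I. a \<union> b \<in> I)"

definition down :: "'a set set \<Rightarrow> 'a set \<Rightarrow> 'a set set" where
  "down L a = {b \<in> L. b \<subseteq> a}"

definition is_pseudocompl :: "'a set set \<Rightarrow> 'a set set \<Rightarrow> 'a set set \<Rightarrow> bool" where
  "is_pseudocompl L J K \<longleftrightarrow> lattice_ideal L K \<and> K \<inter> J = {{}} \<and>
     (\<forall>K'. lattice_ideal L K' \<and> K' \<inter> J = {{}} \<longrightarrow> K' \<subseteq> K)"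

definition nabla :: "'a set set \<Rightarrow> 'a set set \<Rightarrow> ('a set \<times> 'a set) set" where
  "nabla L I = {(x,y). x \<in> L \<and> y \<in> L \<and> (\<exists>i\<in>I. x \<union> i = y \<union> i)}"

definition qmeet :: "('a set \<times> 'a set) set \<Rightarrow> 'a set set \<Rightarrow> 'a set set \<Rightarrow> 'a set set" where
  "qmeet R A B = R `` {(SOME a. a \<in> A) \<inter> (SOME b. b \<in> B)}"

definition qbot :: "('a set \<times> 'a set) set \<Rightarrow> 'a set set" where
  "qbot R = R `` {{}}"

definition qle :: "('a set \<times> 'a set) set \<Rightarrow> 'a set set \<Rightarrow> 'a set set \<Rightarrow> bool" where
  "qle R A B \<longleftrightarrow> qmeet R A B = A"

end

theory Submission
  imports Defs
begin

text \<open>Two members of M are \<nabla>_I-related iff they coincide up to a finite set avoiding 2,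
  i.e. iff they agree on being all of \<nat> and on containing 2. This gives the three classes
  [\<emptyset>] < [{2}] < [\<nat>]. In the quotient, both [{2}] and [\<nat>] meet a class in [\<emptyset>] exactly when
  that class is [\<emptyset>], so they are d-related though distinct. M itself is d-reduced because its
  singletons separate distinct sets.\<close>

lemma d_reduced_if_singletons:
  assumes "\<And>n. {n} \<in> L"
  shows "d_reduced L (\<inter>) {}"
proof -
  have "a = b" if "(a, b) \<in> d_rel L (\<inter>) {}" for a b
  proof -
    from that assms have "a \<inter> {n} = {} \<longleftrightarrow> b \<inter> {n} = {}" for n
      unfolding d_rel_def by blast
    then show ?thesis by blast
  qed
  then show ?thesis
    unfolding d_reduced_def d_rel_def Id_on_def by auto
qed

lemma not_d_reduced_if_d_rel:
  assumes "(a, b) \<in> d_rel L meet z" "a \<noteq> b"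
  shows "\<not> d_reduced L meet z"
  using assms by (metis Id_on_iff d_reduced_def)

lemma qmeet_Image_singleton:
  assumes "equiv L R"
    and compat: "\<And>a b c d. (a, b) \<in> R \<Longrightarrow> (c, d) \<in> R \<Longrightarrow> (a \<inter> c, b \<inter> d) \<in> R"
    and "x \<in> L" "y \<in> L"
  shows "qmeet R (R `` {x}) (R `` {y}) = R `` {x \<inter> y}"
proof -
  define a where "a = (SOME a. a \<in> R `` {x})"
  define b where "b = (SOME b. b \<in> R `` {y})"
  have "x \<in> R `` {x}" using \<open>equiv L R\<close> \<open>x \<in> L\<close> by (rule equiv_class_self)
  then have "a \<in> R `` {x}" unfolding a_def by (rule someI)
  then have "(x, a) \<in> R" by simp
  have "y \<in> R `` {y}" using \<open>equiv L R\<close> \<open>y \<in> L\<close> by (rule equiv_class_self)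
  then have "b \<in> R `` {y}" unfolding b_def by (rule someI)
  then have "(y, b) \<in> R" by simp
  have "R `` {x \<inter> y} = R `` {a \<inter> b}"
    using \<open>equiv L R\<close> compat[OF \<open>(x, a) \<in> R\<close> \<open>(y, b) \<in> R\<close>] by (rule equiv_class_eq)
  then show ?thesis
    unfolding qmeet_def a_def b_def by simp
qed

lemma UNIV_in_finCof [simp]: "UNIV \<in> finCof"
  and finite_in_finCof [simp]: "finite S \<Longrightarrow> S \<in> finCof"
  by (simp_all add: finCof_def)

lemma finCof_d_reduced: "d_reduced finCof (\<inter>) {}"
  by (rule d_reduced_if_singletons) simp

abbreviation I2 :: "nat set set" where
  "I2 \<equiv> {S \<in> finCof. 2 \<notin> S}"

abbreviation R2 :: "(nat set \<times> nat set) set" where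
  "R2 \<equiv> nabla finCof I2"

lemma lattice_ideal_I2: "lattice_ideal finCof I2"
  unfolding lattice_ideal_def by (auto simp: finCof_def intro!: exI[of _ "{}"])

lemma down_finCof_2: "down finCof {2} = {{}, {2}}"
  unfolding down_def by (auto simp: subset_singleton_iff)

lemma is_pseudocompl_I2: "is_pseudocompl finCof (down finCof {2}) I2"
proof -
  have "K \<subseteq> I2" if K: "lattice_ideal finCof K" "K \<inter> {{}, {2}} = {{}}" for K
  proof
    fix S assume "S \<in> K"
    have "2 \<notin> S"
    proof
      assume "2 \<in> S"
      with \<open>S \<in> K\<close> K(1) have "{2} \<in> K"
        unfolding lattice_ideal_def by simp
      with K(2) show False by auto
    qed
    with \<open>S \<in> K\<close> K(1) show "S \<in> I2"
      unfolding lattice_ideal_def by auto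
  qed
  then show ?thesis
    unfolding is_pseudocompl_def down_finCof_2 using lattice_ideal_I2
    by (auto simp: finCof_def)
qed

lemma R2_iff:
  "(x, y) \<in> R2 \<longleftrightarrow> x \<in> finCof \<and> y \<in> finCof \<and> (x = UNIV \<longleftrightarrow> y = UNIV) \<and> (2 \<in> x \<longleftrightarrow> 2 \<in> y)"
proof
  assume "(x, y) \<in> R2"
  then obtain i where xy: "x \<in> finCof" "y \<in> finCof"
    and i: "i \<in> finCof" "2 \<notin> i" "x \<union> i = y \<union> i"
    unfolding nabla_def by auto
  have "finite i" using i by (auto simp: finCof_def)
  have "z = UNIV \<longleftrightarrow> z \<union> i = UNIV" if "z \<in> finCof" for z
  proof
    assume "z \<union> i = UNIV"
    with \<open>finite i\<close> have "infinite z" by (metis finite_UnI infinite_UNIV_nat)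
    with \<open>z \<in> finCof\<close> show "z = UNIV" by (simp add: finCof_def)
  qed simp
  with xy i have "x = UNIV \<longleftrightarrow> y = UNIV" by simp
  moreover have "2 \<in> x \<longleftrightarrow> 2 \<in> y" using i by blast
  ultimately show "x \<in> finCof \<and> y \<in> finCof \<and> (x = UNIV \<longleftrightarrow> y = UNIV) \<and> (2 \<in> x \<longleftrightarrow> 2 \<in> y)"
    using xy by blast
next
  assume h: "x \<in> finCof \<and> y \<in> finCof \<and> (x = UNIV \<longleftrightarrow> y = UNIV) \<and> (2 \<in> x \<longleftrightarrow> 2 \<in> y)"
  show "(x, y) \<in> R2"
  proof (cases "x = UNIV")
    case True
    then show ?thesis using h unfolding nabla_def by (auto intro!: exI[of _ "{}"])
  next
    case False
    then have "x \<union> y - {2} \<in> I2" using h by (auto simp: finCof_def)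
    moreover have "x \<union> (x \<union> y - {2}) = y \<union> (x \<union> y - {2})" using h by auto
    ultimately show ?thesis using h unfolding nabla_def by blast
  qed
qed

lemma equiv_R2: "equiv finCof R2"
  by (rule equivI) (auto simp: refl_on_def sym_def trans_def R2_iff)

lemma Int_in_finCof: "a \<in> finCof \<Longrightarrow> b \<in> finCof \<Longrightarrow> a \<inter> b \<in> finCof"
  by (auto simp: finCof_def)

lemma R2_Int: "(a, b) \<in> R2 \<Longrightarrow> (c, d) \<in> R2 \<Longrightarrow> (a \<inter> c, b \<inter> d) \<in> R2"
  by (simp add: R2_iff Int_in_finCof)

lemma qmeet_R2: "x \<in> finCof \<Longrightarrow> y \<in> finCof \<Longrightarrow> qmeet R2 (R2 `` {x}) (R2 `` {y}) = R2 `` {x \<inter> y}"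
  using equiv_R2 R2_Int by (rule qmeet_Image_singleton)

lemma singleton_2_neq_UNIV [simp]: "{2::nat} \<noteq> UNIV"
  by (metis UNIV_I singletonD zero_neq_numeral)

lemma finCof_quotient_R2: "finCof // R2 = {R2 `` {{}}, R2 `` {{2}}, R2 `` {UNIV}}"
proof
  show "finCof // R2 \<subseteq> {R2 `` {{}}, R2 `` {{2}}, R2 `` {UNIV}}"
  proof
    fix C assume "C \<in> finCof // R2"
    then obtain x where "x \<in> finCof" "C = R2 `` {x}" by (rule quotientE)
    moreover have "(x, {}) \<in> R2 \<or> (x, {2}) \<in> R2 \<or> (x, UNIV) \<in> R2"
      using \<open>x \<in> finCof\<close> by (auto simp: R2_iff)
    ultimately show "C \<in> {R2 `` {{}}, R2 `` {{2}}, R2 `` {UNIV}}"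
      using equiv_class_eq[OF equiv_R2] by blast
  qed
qed (simp add: quotientI)

lemma R2_classes_distinct:
  "R2 `` {{}} \<noteq> R2 `` {{2}}" "R2 `` {{2}} \<noteq> R2 `` {UNIV}" "R2 `` {{}} \<noteq> R2 `` {UNIV}"
proof -
  have "{} \<in> R2 `` {{}}" "{} \<notin> R2 `` {{2}}" "{} \<notin> R2 `` {UNIV}" "{2} \<notin> R2 `` {UNIV}"
    by (simp_all add: R2_iff)
  then show "R2 `` {{}} \<noteq> R2 `` {{2}}" "R2 `` {{2}} \<noteq> R2 `` {UNIV}" "R2 `` {{}} \<noteq> R2 `` {UNIV}"
    using equiv_class_self[OF equiv_R2, of "{2}"] by auto
qed

lemma qmeet_R2_table:
  "qmeet R2 (R2 `` {{}}) (R2 `` {{}}) = R2 `` {{}}"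
  "qmeet R2 (R2 `` {{}}) (R2 `` {{2}}) = R2 `` {{}}"
  "qmeet R2 (R2 `` {{}}) (R2 `` {UNIV}) = R2 `` {{}}"
  "qmeet R2 (R2 `` {{2}}) (R2 `` {{}}) = R2 `` {{}}"
  "qmeet R2 (R2 `` {{2}}) (R2 `` {{2}}) = R2 `` {{2}}"
  "qmeet R2 (R2 `` {{2}}) (R2 `` {UNIV}) = R2 `` {{2}}"
  "qmeet R2 (R2 `` {UNIV}) (R2 `` {{}}) = R2 `` {{}}"
  "qmeet R2 (R2 `` {UNIV}) (R2 `` {{2}}) = R2 `` {{2}}"
  "qmeet R2 (R2 `` {UNIV}) (R2 `` {UNIV}) = R2 `` {UNIV}"
  by (simp_all add: qmeet_R2)

theorem mainTheorem15:
  fixes I :: "nat set set"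
  defines "I \<equiv> {S \<in> finCof. (2::nat) \<notin> S}"
  defines "R \<equiv> nabla finCof I"
  shows "d_reduced finCof (\<inter>) {}
    \<and> lattice_ideal finCof I
    \<and> is_pseudocompl finCof (down finCof {2}) I
    \<and> finCof // R = {R `` {{}}, R `` {{2}}, R `` {UNIV}}
    \<and> R `` {{}} \<noteq> R `` {{2}} \<and> R `` {{2}} \<noteq> R `` {UNIV} \<and> R `` {{}} \<noteq> R `` {UNIV}
    \<and> qle R (R `` {{}}) (R `` {{2}}) \<and> qle R (R `` {{2}}) (R `` {UNIV})
    \<and> (\<exists>f. bij_betw f (finCof // R) {0::nat, 1, 2} \<and>
           (\<forall>A\<in>finCof // R. \<forall>B\<in>finCof // R. qle R A B \<longleftrightarrow> f A \<le> f B))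
    \<and> \<not> d_reduced (finCof // R) (qmeet R) (qbot R)"
proof -
  define lo mid hi where "lo = R2 `` {{}}" and "mid = R2 `` {{2}}" and "hi = R2 `` {UNIV}"
  note distinct = R2_classes_distinct[folded lo_def mid_def hi_def]
  note table = qmeet_R2_table[folded lo_def mid_def hi_def]
  define f where "f A = (if A = lo then 0 else if A = mid then 1 else (2::nat))" for A
  have "bij_betw f {lo, mid, hi} {0, 1, 2}"
    unfolding bij_betw_def inj_on_def f_def using distinct by auto
  moreover have "\<forall>A\<in>{lo, mid, hi}. \<forall>B\<in>{lo, mid, hi}. qle R2 A B \<longleftrightarrow> f A \<le> f B"
    unfolding qle_def f_def using distinct table by auto
  moreover have "(mid, hi) \<in> d_rel {lo, mid, hi} (qmeet R2) (qbot R2)"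
    unfolding d_rel_def qbot_def lo_def[symmetric] using table distinct by auto
  then have "\<not> d_reduced {lo, mid, hi} (qmeet R2) (qbot R2)"
    using distinct(2) by (rule not_d_reduced_if_d_rel)
  moreover have "qle R2 lo mid" "qle R2 mid hi"
    unfolding qle_def by (simp_all only: table)
  ultimately show ?thesis
    unfolding R_def I_def finCof_quotient_R2 lo_def[symmetric] mid_def[symmetric] hi_def[symmetric]
    using finCof_d_reduced lattice_ideal_I2 is_pseudocompl_I2 distinct by blast
qed

end
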